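(* Fix $x\in\mathbb{R}^d$, $\alpha\in\mathbb{R}$, and $0<\sigma_{\min}<\sigma_{\max}$. Let $\mathcal{P}_H$ be the law of $\varphi(x+N_H)$ with $N_H\sim\mathcal{N}(0,\sigma_{\min}^2 I_d)$ and $\mathcal{P}_L$ the law of $\varphi(x+N_L)$ with $N_L\sim\mathcal{N}(0,\sigma_{\max}^2 I_d)$. Then, with $r=\sigma_{\min}/\sigma_{\max}<1$, $$D_{\mathrm{KL}}(\mathcal{P}_L\,\|\,\mathcal{P}_H)\ \ge\ \frac{d}{2}\left(r^2-2\ln r-1\right).$$
   Context: $\varphi:\mathbb{R}^d\to\mathbb{R}^{2d}$ (Reverse Manifold Embedding) sends $x=(x_1,\dots,x_d)$ to the vector consisting of the pairs $(x_j\cos(\alpha x_j),\,x_j\sin(\alpha x_j))$, $j=1,\dots,d$. In the paper, $\sigma_{\min}$ and $\sigma_{\max}$ are the Gaussian noise levels at trust scores $\mathcal{T}=0$ and $\mathcal{T}=1$ respectively. $D_{\mathrm{KL}}$ denotes Kullback–Leibler divergence. *)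

theory Defs
  imports "HOL-Probability.Probability"
begin

definition rme :: "real \<Rightarrow> real ^ 'd \<Rightarrow> real ^ ('d + 'd)" where
  "rme \<alpha> x = (\<chi> k. case k of Inl j \<Rightarrow> x $ j * cos (\<alpha> * x $ j)
                              | Inr j \<Rightarrow> x $ j * sin (\<alpha> * x $ j))"

definition gauss_vec :: "real ^ 'd \<Rightarrow> real \<Rightarrow> (real ^ 'd) measure" where
  "gauss_vec x \<sigma> = density lborel (\<lambda>y. ennreal (\<Prod>j\<in>UNIV. normal_density (x $ j) \<sigma> (y $ j)))"

definition rme_law :: "real \<Rightarrow> real ^ 'd \<Rightarrow> real \<Rightarrow> (real ^ ('d + 'd)) measure" where
  "rme_law \<alpha> x \<sigma> = distr (gauss_vec x \<sigma>) borel (rme \<alpha>)"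

text \<open>D_KL(P || Q) in nats; note the library's argument order KL_divergence b Q P.\<close>
definition D_KL :: "'a measure \<Rightarrow> 'a measure \<Rightarrow> real" where
  "D_KL P Q = KL_divergence (exp 1) Q P"

end

theory Submission
  imports Defs
begin

text \<open>Off the null set where some \<open>cos (\<alpha> * y $ j)\<close> vanishes, \<open>rme \<alpha>\<close> has a measurable
  left inverse. So the likelihood ratio of the two pushed-forward laws is the Gaussian likelihood
  ratio composed with that inverse, and the divergence equals the Gaussian one,
  \<open>d/2 * (s\<^sup>2 - 2 ln s - 1)\<close> with \<open>s = 1/r\<close>. This dominates \<open>d/2 * (r\<^sup>2 - 2 ln r - 1)\<close>
  because the difference is \<open>d * (sinh t - t)\<close> for \<open>t = 2 ln s \<ge> 0\<close>.\<close>

lemma KL_divergence_distr_density: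
  fixes f :: "'a \<Rightarrow> real" and g :: "'b \<Rightarrow> real"
  assumes "1 < b" and "prob_space M" and T[measurable]: "T \<in> M \<rightarrow>\<^sub>M N"
    and f[measurable]: "f \<in> borel_measurable M" and f_nonneg: "AE x in M. 0 \<le> f x"
    and g[measurable]: "g \<in> borel_measurable N" and g_T: "AE x in M. g (T x) = f x"
  shows "KL_divergence b (distr M N T) (distr (density M f) N T)
           = KL_divergence b M (density M f)"
proof -
  interpret M: prob_space M by fact
  interpret TM: prob_space "distr M N T" by (rule M.prob_space_distr) simp
  have g_nonneg: "AE z in distr M N T. 0 \<le> g z"
    using f_nonneg g_T by (subst AE_distr_iff) auto
  have "distr (density M f) N T = distr (density M (\<lambda>x. g (T x))) N T"
    using g_T by (subst density_cong) auto
  also have "\<dots> = density (distr M N T) g"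
    by (rule density_distr[symmetric]) simp_all
  finally have "KL_divergence b (distr M N T) (distr (density M f) N T)
                  = (\<integral>z. g z * log b (g z) \<partial>distr M N T)"
    using \<open>1 < b\<close> g_nonneg by (simp add: TM.KL_density)
  also have "\<dots> = (\<integral>x. g (T x) * log b (g (T x)) \<partial>M)"
    by (rule integral_distr) simp_all
  also have "\<dots> = (\<integral>x. f x * log b (f x) \<partial>M)"
    using g_T by (intro integral_cong_AE) auto
  also have "\<dots> = KL_divergence b M (density M f)"
    using \<open>1 < b\<close> f_nonneg by (simp add: M.KL_density)
  finally show ?thesis .
qed

lemma borel_measurable_vec_lambda [measurable (raw)]:
  fixes f :: "'a \<Rightarrow> 'n::finite \<Rightarrow> real"
  assumes "\<And>j. (\<lambda>x. f x j) \<in> borel_measurable M"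
  shows "(\<lambda>x. \<chi> j. f x j) \<in> borel_measurable M"
  using assms
  by (subst borel_measurable_euclidean_space) (auto simp: Basis_vec_def inner_axis)

lemma nn_integral_lborel_vec_prod:
  fixes f :: "'n::finite \<Rightarrow> real \<Rightarrow> ennreal"
  assumes [measurable]: "\<And>j. f j \<in> borel_measurable borel"
  shows "(\<integral>\<^sup>+y. (\<Prod>j\<in>UNIV. f j (y $ j)) \<partial>(lborel :: (real^'n) measure))
           = (\<Prod>j\<in>UNIV. \<integral>\<^sup>+t. f j t \<partial>lborel)"
proof -
  define g where "g b = f (SOME j. b = axis j (1::real))" for b :: "real^'n"
  have g_axis: "g (axis j 1) = f j" for j
    unfolding g_def by (rule arg_cong[where f=f]) (metis (mono_tags) axis_eq_axis one_neq_zero someI_ex)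
  have Basis_eq: "(Basis :: (real^'n) set) = range (\<lambda>j. axis j 1)"
    by (auto simp: Basis_vec_def)
  have inj: "inj (\<lambda>j::'n. axis j (1::real))"
    by (auto simp: inj_def axis_eq_axis)
  have "(\<integral>\<^sup>+y. (\<Prod>b\<in>Basis. g b (y \<bullet> b)) \<partial>(lborel :: (real^'n) measure))
          = (\<Prod>b\<in>Basis. \<integral>\<^sup>+t. g b t \<partial>lborel)"
    by (rule nn_integral_lborel_prod) (auto simp: Basis_eq g_axis)
  then show ?thesis
    unfolding Basis_eq prod.reindex[OF inj] by (simp add: g_axis inner_axis)
qed

lemma AE_lborel_vec_nth_neq: "AE y in lborel. (y :: real^'n) $ j \<noteq> c"
  using AE_lborel_inner_neq[of "axis j (1::real)" c] by (simp add: cart_eq_inner_axis)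

text \<open>The point \<open>(t cos (\<alpha> t), t sin (\<alpha> t))\<close> has norm \<open>\<bar>t\<bar>\<close>; the sign of \<open>t\<close> is recovered
  by testing the positive candidate, which for \<open>t < 0\<close> fails unless \<open>cos (\<alpha> t) = 0\<close>.\<close>
definition spiral_inv :: "real \<Rightarrow> real \<Rightarrow> real \<Rightarrow> real" where
  "spiral_inv \<alpha> a b =
     (let \<rho> = sqrt (a\<^sup>2 + b\<^sup>2) in if \<rho> * cos (\<alpha> * \<rho>) = a \<and> \<rho> * sin (\<alpha> * \<rho>) = b then \<rho> else - \<rho>)"

lemma spiral_inv_spiral:
  assumes "cos (\<alpha> * t) \<noteq> 0"
  shows "spiral_inv \<alpha> (t * cos (\<alpha> * t)) (t * sin (\<alpha> * t)) = t"
proof -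
  have "sqrt ((t * cos (\<alpha> * t))\<^sup>2 + (t * sin (\<alpha> * t))\<^sup>2) = \<bar>t\<bar>"
    by (simp add: power_mult_distrib flip: distrib_left)
  moreover have "t < 0 \<Longrightarrow> - t * cos (\<alpha> * - t) \<noteq> t * cos (\<alpha> * t)"
    using assms by simp
  ultimately show ?thesis
    unfolding spiral_inv_def Let_def by (cases "0 \<le> t") auto
qed

definition rme_inv :: "real \<Rightarrow> real ^ ('d + 'd) \<Rightarrow> real ^ 'd" where
  "rme_inv \<alpha> z = (\<chi> j. spiral_inv \<alpha> (z $ Inl j) (z $ Inr j))"

lemma measurable_rme [measurable]: "rme \<alpha> \<in> borel_measurable (borel :: (real ^ 'd) measure)"
  unfolding rme_def
proof (intro borel_measurable_vec_lambda)
  fix k :: "'d + 'd"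
  show "(\<lambda>y. case k of Inl j \<Rightarrow> y $ j * cos (\<alpha> * y $ j) | Inr j \<Rightarrow> y $ j * sin (\<alpha> * y $ j))
          \<in> borel_measurable borel"
    by (cases k) simp_all
qed

lemma measurable_rme_inv [measurable]:
  "rme_inv \<alpha> \<in> borel_measurable (borel :: (real ^ ('d::finite + 'd)) measure)"
  unfolding rme_inv_def spiral_inv_def Let_def by measurable

lemma AE_lborel_cos_vec_nth_neq_0: "AE y in lborel. \<forall>j. cos (\<alpha> * (y :: real^'n) $ j) \<noteq> 0"
proof -
  have "AE y in lborel. \<forall>j. \<forall>i::int. (y :: real^'n) $ j \<noteq> of_int i * (pi/2) / \<alpha>"
    by (simp add: AE_all_countable AE_lborel_vec_nth_neq)
  then show ?thesis
  proof (rule AE_mp, intro AE_I2 impI allI notI)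
    fix y :: "real^'n" and j
    assume off_zeros: "\<forall>j. \<forall>i::int. y $ j \<noteq> of_int i * (pi/2) / \<alpha>"
      and cos_0: "cos (\<alpha> * y $ j) = 0"
    then have "\<alpha> \<noteq> 0"
      by auto
    obtain i :: int where "\<alpha> * y $ j = of_int i * (pi/2)"
      using cos_0 by (auto simp: cos_zero_iff_int)
    with off_zeros \<open>\<alpha> \<noteq> 0\<close> show False
      by (auto simp: field_simps)
  qed
qed

lemma AE_lborel_rme_inv_rme: "AE y in lborel. rme_inv \<alpha> (rme \<alpha> y) = (y :: real^'d)"
  using AE_lborel_cos_vec_nth_neq_0[of \<alpha>]
  by eventually_elim (simp add: rme_inv_def rme_def spiral_inv_spiral vec_eq_iff)

definition gauss_vec_density :: "real ^ 'd \<Rightarrow> real \<Rightarrow> real ^ 'd \<Rightarrow> real" where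
  "gauss_vec_density x \<sigma> y = (\<Prod>j\<in>UNIV. normal_density (x $ j) \<sigma> (y $ j))"

lemma gauss_vec_eq_density: "gauss_vec x \<sigma> = density lborel (gauss_vec_density x \<sigma>)"
  unfolding gauss_vec_def gauss_vec_density_def ..

lemma nn_integral_gauss_vec_component:
  fixes x :: "real ^ 'd" and g :: "real \<Rightarrow> ennreal"
  assumes "0 < \<sigma>" and [measurable]: "g \<in> borel_measurable borel"
  shows "(\<integral>\<^sup>+y. g (y $ k) \<partial>gauss_vec x \<sigma>) = (\<integral>\<^sup>+t. normal_density (x $ k) \<sigma> t * g t \<partial>lborel)"
proof -
  define F where "F j t = ennreal (normal_density (x $ j) \<sigma> t) * (if j = k then g t else 1)" for j t
  have [measurable]: "F j \<in> borel_measurable borel" for j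
    unfolding F_def by measurable
  have "(\<integral>\<^sup>+y. g (y $ k) \<partial>gauss_vec x \<sigma>) = (\<integral>\<^sup>+y. (\<Prod>j\<in>UNIV. F j (y $ j)) \<partial>lborel)"
    unfolding gauss_vec_def F_def prod.distrib
    by (subst nn_integral_density) (auto simp: prod_ennreal intro!: nn_integral_cong)
  also have "\<dots> = (\<Prod>j\<in>UNIV. \<integral>\<^sup>+t. F j t \<partial>lborel)"
    by (rule nn_integral_lborel_vec_prod) simp
  also have "\<dots> = (\<Prod>j\<in>UNIV. if j = k then \<integral>\<^sup>+t. F k t \<partial>lborel else 1)"
  proof (rule prod.cong)
    fix j
    have "(\<integral>\<^sup>+t. ennreal (normal_density (x $ j) \<sigma> t) \<partial>lborel) = 1"
      using \<open>0 < \<sigma>\<close> by (subst nn_integral_eq_integral) auto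
    then show "(\<integral>\<^sup>+t. F j t \<partial>lborel) = (if j = k then \<integral>\<^sup>+t. F k t \<partial>lborel else 1)"
      by (simp add: F_def)
  qed simp
  finally show ?thesis
    by (simp add: F_def[abs_def])
qed

lemma sets_gauss_vec [measurable_cong]: "sets (gauss_vec x \<sigma>) = sets borel"
  by (simp add: gauss_vec_def)

lemma prob_space_gauss_vec:
  fixes x :: "real ^ 'd"
  assumes "0 < \<sigma>"
  shows "prob_space (gauss_vec x \<sigma>)"
proof (rule prob_spaceI)
  fix k :: 'd
  have "(\<integral>\<^sup>+y. 1 \<partial>gauss_vec x \<sigma>) = (\<integral>\<^sup>+t. ennreal (normal_density (x $ k) \<sigma> t) * 1 \<partial>lborel)"
    using assms by (rule nn_integral_gauss_vec_component) simp
  then show "emeasure (gauss_vec x \<sigma>) (space (gauss_vec x \<sigma>)) = 1"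
    using assms by (simp add: nn_integral_eq_integral)
qed

lemma
  fixes x :: "real ^ 'd"
  assumes "0 < \<sigma>"
  shows integrable_gauss_vec_component_sq: "integrable (gauss_vec x \<sigma>) (\<lambda>y. (y $ k - x $ k)\<^sup>2)"
    and integral_gauss_vec_component_sq: "(\<integral>y. (y $ k - x $ k)\<^sup>2 \<partial>gauss_vec x \<sigma>) = \<sigma>\<^sup>2"
proof -
  have "(\<integral>t. normal_density (x $ k) \<sigma> t * (t - x $ k)\<^sup>2 \<partial>lborel) = \<sigma>\<^sup>2"
    using integral_normal_moment_even[OF assms, of "x $ k" 1] by simp
  then have "(\<integral>\<^sup>+y. (y $ k - x $ k)\<^sup>2 \<partial>gauss_vec x \<sigma>) = \<sigma>\<^sup>2"
    using integrable_normal_moment[OF assms, of "x $ k" 2] assms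
    by (subst nn_integral_gauss_vec_component[where g="\<lambda>t. (t - x $ k)\<^sup>2"])
       (simp_all add: nn_integral_eq_integral flip: ennreal_mult)
  then show "integrable (gauss_vec x \<sigma>) (\<lambda>y. (y $ k - x $ k)\<^sup>2)"
    and "(\<integral>y. (y $ k - x $ k)\<^sup>2 \<partial>gauss_vec x \<sigma>) = \<sigma>\<^sup>2"
    by (auto intro!: integrableI_nonneg simp: integral_eq_nn_integral)
qed

definition gauss_vec_log_ratio :: "real ^ 'd \<Rightarrow> real \<Rightarrow> real \<Rightarrow> real ^ 'd \<Rightarrow> real" where
  "gauss_vec_log_ratio x u v y =
     real CARD('d) * ln (u / v) + (1 / (2 * u\<^sup>2) - 1 / (2 * v\<^sup>2)) * (\<Sum>j\<in>UNIV. (y $ j - x $ j)\<^sup>2)"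

lemma measurable_gauss_vec_log_ratio [measurable]:
  "gauss_vec_log_ratio x u v \<in> borel_measurable borel"
  unfolding gauss_vec_log_ratio_def by measurable

lemma normal_density_rescale:
  assumes "0 < u" "0 < v"
  shows "normal_density \<mu> u t * (u / v * exp ((1 / (2 * u\<^sup>2) - 1 / (2 * v\<^sup>2)) * (t - \<mu>)\<^sup>2))
           = normal_density \<mu> v t"
proof -
  have "exp (- (t - \<mu>)\<^sup>2 / (2 * u\<^sup>2)) * exp ((1 / (2 * u\<^sup>2) - 1 / (2 * v\<^sup>2)) * (t - \<mu>)\<^sup>2)
          = exp (- (t - \<mu>)\<^sup>2 / (2 * v\<^sup>2))"
    using assms by (simp add: field_simps flip: exp_add)
  then show ?thesis
    using assms by (simp add: normal_density_def real_sqrt_mult field_simps)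
qed

lemma gauss_vec_eq_density_log_ratio:
  fixes x :: "real ^ 'd"
  assumes "0 < u" "0 < v"
  shows "gauss_vec x v = density (gauss_vec x u) (\<lambda>y. exp (gauss_vec_log_ratio x u v y))"
proof -
  define c where "c = 1 / (2 * u\<^sup>2) - 1 / (2 * v\<^sup>2)"
  have "gauss_vec_density x u y * exp (gauss_vec_log_ratio x u v y) = gauss_vec_density x v y" for y
  proof -
    have "exp (gauss_vec_log_ratio x u v y)
            = (\<Prod>j\<in>(UNIV :: 'd set). u / v) * (\<Prod>j\<in>UNIV. exp (c * (y $ j - x $ j)\<^sup>2))"
      using assms
      by (simp add: gauss_vec_log_ratio_def c_def exp_add exp_of_nat_mult exp_sum sum_distrib_left)
    then have "gauss_vec_density x u y * exp (gauss_vec_log_ratio x u v y)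
                 = (\<Prod>j\<in>UNIV. normal_density (x $ j) u (y $ j) * (u / v * exp (c * (y $ j - x $ j)\<^sup>2)))"
      by (simp only: gauss_vec_density_def prod.distrib)
    also have "\<dots> = gauss_vec_density x v y"
      unfolding gauss_vec_density_def c_def by (simp only: normal_density_rescale[OF assms])
    finally show ?thesis .
  qed
  then show ?thesis
    unfolding gauss_vec_eq_density
    by (subst density_density_eq) (auto simp: gauss_vec_density_def prod_nonneg ennreal_mult'[symmetric])
qed

lemma D_KL_gauss_vec:
  fixes x :: "real ^ 'd"
  assumes "0 < u" "0 < v"
  shows "D_KL (gauss_vec x v) (gauss_vec x u) = real CARD('d) / 2 * ((v / u)\<^sup>2 - 2 * ln (v / u) - 1)"
proof -
  interpret GH: prob_space "gauss_vec x u" using assms(1) by (rule prob_space_gauss_vec)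
  interpret GL: prob_space "gauss_vec x v" using assms(2) by (rule prob_space_gauss_vec)
  define L where "L = gauss_vec_log_ratio x u v"
  define c where "c = 1 / (2 * u\<^sup>2) - 1 / (2 * v\<^sup>2)"
  have "D_KL (gauss_vec x v) (gauss_vec x u) = (\<integral>y. exp (L y) * L y \<partial>gauss_vec x u)"
    unfolding D_KL_def gauss_vec_eq_density_log_ratio[OF assms]
    by (subst GH.KL_density) (auto simp: L_def log_def)
  also have "\<dots> = (\<integral>y. L y \<partial>gauss_vec x v)"
    unfolding gauss_vec_eq_density_log_ratio[OF assms]
    by (subst integral_density) (auto simp: L_def)
  also have "\<dots> = real CARD('d) * ln (u / v) + c * (real CARD('d) * v\<^sup>2)"
    using assms(2)
    by (simp add: L_def gauss_vec_log_ratio_def c_def GL.prob_space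
                  integrable_gauss_vec_component_sq integral_gauss_vec_component_sq)
  also have "\<dots> = real CARD('d) / 2 * ((v / u)\<^sup>2 - 2 * ln (v / u) - 1)"
    using assms by (simp add: c_def ln_div field_simps power2_eq_square)
  finally show ?thesis .
qed

lemma D_KL_rme_law:
  fixes x :: "real ^ 'd"
  assumes "0 < u" "0 < v"
  shows "D_KL (rme_law \<alpha> x v) (rme_law \<alpha> x u) = D_KL (gauss_vec x v) (gauss_vec x u)"
proof -
  let ?L = "gauss_vec_log_ratio x u v"
  have "AE y in gauss_vec x u. exp (?L (rme_inv \<alpha> (rme \<alpha> y))) = exp (?L y)"
    unfolding gauss_vec_eq_density using AE_lborel_rme_inv_rme[of \<alpha>]
    by (subst AE_density) (auto simp: gauss_vec_density_def)
  then show ?thesis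
    unfolding D_KL_def rme_law_def gauss_vec_eq_density_log_ratio[OF assms]
    using assms
    by (intro KL_divergence_distr_density[where g="\<lambda>z. exp (?L (rme_inv \<alpha> z))"])
       (auto intro: prob_space_gauss_vec)
qed

lemma power2_minus_two_ln_le_inverse:
  fixes r :: real
  assumes "0 < r" "r \<le> 1"
  shows "r\<^sup>2 - 2 * ln r \<le> (1 / r)\<^sup>2 - 2 * ln (1 / r)"
proof -
  have "exp (- 2 * ln r) = (1 / r)\<^sup>2"
    using assms by (simp add: exp_minus exp_of_nat_mult[of 2, simplified] power_one_over inverse_eq_divide)
  moreover have "- 2 * ln r \<le> (exp (- 2 * ln r) - inverse (exp (- 2 * ln r))) / 2"
    using assms by (intro real_le_x_sinh) simp
  ultimately have "- 2 * ln r \<le> ((1 / r)\<^sup>2 - r\<^sup>2) / 2"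
    by (simp add: power_one_over)
  moreover have "ln (1 / r) = - ln r"
    using assms by (simp add: ln_div)
  ultimately show ?thesis
    by argo
qed

theorem mainTheorem2:
  fixes x :: "real ^ 'd" and \<alpha> \<sigma>\<^sub>m\<^sub>i\<^sub>n \<sigma>\<^sub>m\<^sub>a\<^sub>x :: real
  assumes "0 < \<sigma>\<^sub>m\<^sub>i\<^sub>n" and "\<sigma>\<^sub>m\<^sub>i\<^sub>n < \<sigma>\<^sub>m\<^sub>a\<^sub>x"
  shows "D_KL (rme_law \<alpha> x \<sigma>\<^sub>m\<^sub>a\<^sub>x) (rme_law \<alpha> x \<sigma>\<^sub>m\<^sub>i\<^sub>n)
           \<ge> real CARD('d) / 2 *
              ((\<sigma>\<^sub>m\<^sub>i\<^sub>n / \<sigma>\<^sub>m\<^sub>a\<^sub>x)\<^sup>2 - 2 * ln (\<sigma>\<^sub>m\<^sub>i\<^sub>n / \<sigma>\<^sub>m\<^sub>a\<^sub>x) - 1)"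
proof -
  let ?r = "\<sigma>\<^sub>m\<^sub>i\<^sub>n / \<sigma>\<^sub>m\<^sub>a\<^sub>x"
  have pos: "0 < \<sigma>\<^sub>m\<^sub>i\<^sub>n" "0 < \<sigma>\<^sub>m\<^sub>a\<^sub>x"
    using assms by simp_all
  have "?r\<^sup>2 - 2 * ln ?r \<le> (1 / ?r)\<^sup>2 - 2 * ln (1 / ?r)"
    using assms by (intro power2_minus_two_ln_le_inverse) simp_all
  then have "real CARD('d) / 2 * (?r\<^sup>2 - 2 * ln ?r - 1)
               \<le> real CARD('d) / 2 * ((\<sigma>\<^sub>m\<^sub>a\<^sub>x / \<sigma>\<^sub>m\<^sub>i\<^sub>n)\<^sup>2 - 2 * ln (\<sigma>\<^sub>m\<^sub>a\<^sub>x / \<sigma>\<^sub>m\<^sub>i\<^sub>n) - 1)"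
    by (intro mult_left_mono) simp_all
  also have "\<dots> = D_KL (rme_law \<alpha> x \<sigma>\<^sub>m\<^sub>a\<^sub>x) (rme_law \<alpha> x \<sigma>\<^sub>m\<^sub>i\<^sub>n)"
    using pos by (simp add: D_KL_rme_law D_KL_gauss_vec)
  finally show ?thesis .
qed

end
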